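(* Let $G=(\mathbb Z/a_1\mathbb Z)\times\dots\times(\mathbb Z/a_r\mathbb Z)$ be a finite Abelian group with $N=\exp(G)$ even, and let $f:G\to\mathbb Q$ be rational-valued. Let $2^m$ ($m\ge1$) be the highest power of $2$ dividing $N$ and $\ell=\phi(N/2^m)$. For each $k\ge 1$ let $u_k,v_k\in(\mathbb Z/N\mathbb Z)^\times$ satisfy $2^k\equiv u_k+v_k\pmod N$, chosen so that $u_1=v_1=1$ and $u_{k+\ell}=u_k$, $v_{k+\ell}=v_k$ for all $k\ge m$. For $x\in G$ set $$\widehat A_k=\widehat M_4(f;u_kx,v_kx,-u_kx),\qquad \widehat B_k=\widehat M_6(f;u_kx,v_kx,u_kx,v_kx,-u_{k+1}x).$$ Then for every $x\in\operatorname{supp}(\widehat f)$, $$\widehat f(x)^{2^m(2^\ell-1)}=\frac{\prod_{k=1}^{\ell+m-1}(\widehat B_k/\widehat A_{k+1})^{2^{\ell+m-1-k}}}{\prod_{k=1}^{m-1}(\widehat B_k/\widehat A_{k+1})^{2^{m-1-k}}},$$ all quantities $\widehat A_{k+1}$ appearing being nonzero.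
   Context: Elements of $G$ are tuples with componentwise addition modulo $a_k$; $\exp(G)=\min\{n>0: nx=0\ \forall x\in G\}$; $\phi$ is Euler's phi function; $(\mathbb Z/N\mathbb Z)^\times$ is the set of residues coprime to $N$. Define $\chi(x,y)=\exp\left(2\pi i\sum_{k=1}^r \frac{x[k]y[k]}{a_k}\right)$, $\widehat f(x)=\sum_{y\in G}f(y)\overline{\chi(x,y)}$, $\operatorname{supp}(\widehat f)=\{x:\widehat f(x)\ne0\}$, and the transformed autocorrelations $\widehat M_n(f;x_1,\dots,x_{n-1})=\widehat f(x_1)\cdots\widehat f(x_{n-1})\widehat f(-(x_1+\dots+x_{n-1}))$. *)

theory Defs
  imports "HOL-Analysis.Analysis" "HOL-Number_Theory.Number_Theory"
begin

text \<open>The group G = Z/a_1 x ... x Z/a_r is encoded by the list of moduli a = [a_1,...,a_r].\<close>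

definition grp :: "nat list \<Rightarrow> (nat \<Rightarrow> int) set" where
  "grp a = {x. (\<forall>k<length a. 0 \<le> x k \<and> x k < int (a ! k)) \<and> (\<forall>k\<ge>length a. x k = 0)}"

definition gzero :: "nat \<Rightarrow> int" where
  "gzero = (\<lambda>k. 0)"

definition gadd :: "nat list \<Rightarrow> (nat \<Rightarrow> int) \<Rightarrow> (nat \<Rightarrow> int) \<Rightarrow> (nat \<Rightarrow> int)" where
  "gadd a x y = (\<lambda>k. if k < length a then (x k + y k) mod int (a ! k) else 0)"

definition gneg :: "nat list \<Rightarrow> (nat \<Rightarrow> int) \<Rightarrow> (nat \<Rightarrow> int)" where
  "gneg a x = (\<lambda>k. if k < length a then (- x k) mod int (a ! k) else 0)"

definition gsmul :: "nat list \<Rightarrow> int \<Rightarrow> (nat \<Rightarrow> int) \<Rightarrow> (nat \<Rightarrow> int)" where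
  "gsmul a n x = (\<lambda>k. if k < length a then (n * x k) mod int (a ! k) else 0)"

definition gsum :: "nat list \<Rightarrow> (nat \<Rightarrow> int) list \<Rightarrow> (nat \<Rightarrow> int)" where
  "gsum a xs = foldr (gadd a) xs gzero"

definition expG :: "nat list \<Rightarrow> nat" where
  "expG a = (LEAST n. n > 0 \<and> (\<forall>x\<in>grp a. gsmul a (int n) x = gzero))"

definition chi :: "nat list \<Rightarrow> (nat \<Rightarrow> int) \<Rightarrow> (nat \<Rightarrow> int) \<Rightarrow> complex" where
  "chi a x y = exp (2 * of_real pi * \<i> *
      of_real (\<Sum>k<length a. of_int (x k * y k) / of_nat (a ! k)))"

definition fhat :: "nat list \<Rightarrow> ((nat \<Rightarrow> int) \<Rightarrow> rat) \<Rightarrow> (nat \<Rightarrow> int) \<Rightarrow> complex" where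
  "fhat a f x = (\<Sum>y\<in>grp a. of_real (of_rat (f y)) * cnj (chi a x y))"

text \<open>Transformed autocorrelation: Mhat_n(f; x_1,...,x_{n-1}) for the list xs = [x_1,...,x_{n-1}].\<close>
definition Mhat :: "nat list \<Rightarrow> ((nat \<Rightarrow> int) \<Rightarrow> rat) \<Rightarrow> (nat \<Rightarrow> int) list \<Rightarrow> complex" where
  "Mhat a f xs = (\<Prod>x\<leftarrow>xs. fhat a f x) * fhat a f (gneg a (gsum a xs))"

end

theory Submission
  imports Defs "HOL-Computational_Algebra.Computational_Algebra"
begin

text \<open>
  Since f is rational-valued, c \<mapsto> fhat(c x) is, up to a positive integer factor, an integer
  polynomial evaluated at \<omega>^c for an N-th root of unity \<omega>. An integer polynomial
  vanishing at \<omega> also vanishes at \<omega>^c for every c coprime to N (Dedekind's proof of the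
  irreducibility of cyclotomic polynomials), so fhat(c x) \<noteq> 0 for all units c.
  With P_k = fhat(u_k x) fhat(v_k x) and P'_k = fhat(-u_k x) fhat(-v_k x) one has
  A_k = P_k P'_k and, because 2(u_k + v_k) \<equiv> u_(k+1) + v_(k+1) (mod N),
  B_k = P_k^2 P'_(k+1). Hence B_k / A_(k+1) = P_k^2 / P_(k+1), the weighted products telescope
  to P_1^(2^n) / P_(n+1), and P_1 = fhat(x)^2 together with the periodicity P_(l+m) = P_m
  yields the formula.
\<close>

section \<open>Integer polynomials at roots of unity\<close>

abbreviation ipoly :: "int poly \<Rightarrow> 'a::comm_ring_1 \<Rightarrow> 'a" where
  "ipoly q \<equiv> poly (map_poly of_int q)"

lemma map_poly_of_int_add [simp]:
  "(map_poly of_int (p + q) :: 'a::comm_ring_1 poly) = map_poly of_int p + map_poly of_int q"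
  by (rule poly_eqI) (simp add: coeff_map_poly)

lemma map_poly_of_int_diff [simp]:
  "(map_poly of_int (p - q) :: 'a::comm_ring_1 poly) = map_poly of_int p - map_poly of_int q"
  by (rule poly_eqI) (simp add: coeff_map_poly)

lemma map_poly_of_int_mult [simp]:
  "(map_poly of_int (p * q) :: 'a::comm_ring_1 poly) = map_poly of_int p * map_poly of_int q"
  by (rule poly_eqI) (simp add: coeff_map_poly coeff_mult)

lemma map_poly_of_int_power [simp]:
  "(map_poly of_int (p ^ n) :: 'a::comm_ring_1 poly) = map_poly of_int p ^ n"
  by (induction n) simp_all

lemma map_poly_of_int_const [simp]:
  "(map_poly of_int [:c:] :: 'a::comm_ring_1 poly) = [:of_int c:]"
  by (simp add: map_poly_pCons)

lemma map_poly_of_int_smult [simp]: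
  "(map_poly of_int (Polynomial.smult c p) :: 'a::comm_ring_1 poly) = Polynomial.smult (of_int c) (map_poly of_int p)"
  by (rule poly_eqI) (simp add: coeff_map_poly)

lemma map_poly_of_int_monom [simp]:
  "(map_poly of_int (Polynomial.monom c n) :: 'a::comm_ring_1 poly) = Polynomial.monom (of_int c) n"
  by (simp add: map_poly_monom)

lemma map_poly_of_int_pcompose [simp]:
  "(map_poly of_int (pcompose p q) :: 'a::comm_ring_1 poly) =
     pcompose (map_poly of_int p) (map_poly of_int q)"
  by (induction p) (simp_all add: pcompose_pCons map_poly_pCons)

lemma map_poly_of_int_sum:
  "(map_poly of_int (sum g S) :: 'a::comm_ring_1 poly) = (\<Sum>y\<in>S. map_poly of_int (g y))"
  by (induction S rule: infinite_finite_induct) simp_all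

lemma root_of_unity_power:
  fixes w :: "'a::monoid_mult"
  assumes "w ^ N = 1"
  shows "(w ^ c) ^ N = 1"
  by (metis assms power_mult mult.commute power_one)

lemma prime_dvd_power_add_sub:
  fixes a b :: "'a::comm_ring_1"
  assumes "prime p"
  shows "of_nat p dvd (a + b) ^ p - (a ^ p + b ^ p)"
proof -
  have p0: "p \<noteq> 0" using assms by auto
  have "(a + b) ^ p - (a ^ p + b ^ p) = (\<Sum>k\<in>{1..<p}. of_nat (p choose k) * a ^ k * b ^ (p - k))"
  proof -
    have "{..p} = insert 0 (insert p {1..<p})" using p0 by auto
    then show ?thesis using p0 by (simp add: binomial_ring algebra_simps)
  qed
  also have "of_nat p dvd \<dots>"
  proof (rule dvd_sum)
    fix k assume "k \<in> {1..<p}"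
    then have "p dvd p choose k" using assms by (intro dvd_choose_prime) auto
    then have "of_nat p dvd (of_nat (p choose k) :: 'a)" by (elim dvdE) simp
    then show "of_nat p dvd of_nat (p choose k) * a ^ k * b ^ (p - k)"
      by (intro dvd_mult2)
  qed
  finally show ?thesis .
qed

lemma fermat_little_int:
  fixes n :: int
  assumes "prime p"
  shows "int p dvd n ^ p - n"
proof (induction n rule: int_induct[where k = 0])
  case base
  show ?case using assms by (simp add: prime_gt_0_nat zero_power)
next
  case (step1 i)
  have "int p dvd ((i + 1) ^ p - (i ^ p + 1 ^ p)) + (i ^ p - i)"
    using prime_dvd_power_add_sub[OF assms, of i 1] step1.IH by (intro dvd_add) simp_all
  then show ?case by (simp add: algebra_simps)
next
  case (step2 i)
  have "int p dvd (i ^ p - i) - ((i - 1 + 1) ^ p - ((i - 1) ^ p + 1 ^ p))"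
    using step2.IH prime_dvd_power_add_sub[OF assms, of "i - 1" 1] by (rule dvd_diff)
  then show ?case by (simp add: algebra_simps)
qed

lemma prime_dvd_power_sub_pcompose_monom:
  fixes h :: "int poly"
  assumes "prime p"
  shows "[:int p:] dvd h ^ p - pcompose h (Polynomial.monom 1 p)"
proof (induction h)
  case 0
  show ?case using assms by (simp add: zero_power prime_gt_0_nat)
next
  case (pCons c h)
  define X :: "int poly" where "X = [:0, 1:]"
  define M :: "int poly" where "M = Polynomial.monom 1 p"
  have pCons_eq: "pCons c h = [:c:] + X * h" by (simp add: X_def)
  have XM: "X ^ p = M" by (simp add: X_def M_def monom_altdef)
  have split: "pCons c h ^ p - pcompose (pCons c h) M =
      (([:c:] + X * h) ^ p - ([:c:] ^ p + (X * h) ^ p)) + [:c ^ p - c:] + M * (h ^ p - pcompose h M)"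
    unfolding pcompose_pCons pCons_eq[symmetric]
    by (simp add: poly_const_pow power_mult_distrib XM algebra_simps)
  have "[:int p:] dvd ([:c:] + X * h) ^ p - ([:c:] ^ p + (X * h) ^ p)"
    using prime_dvd_power_add_sub[OF assms, of "[:c:]" "X * h"] by (simp only: of_nat_poly)
  moreover have "[:int p:] dvd [:c ^ p - c:]"
    using fermat_little_int[OF assms] by simp
  ultimately show ?case
    unfolding M_def[symmetric] split using pCons.IH[folded M_def] by (intro dvd_add dvd_mult)
qed

lemma prime_dvd_const_of_monic_mult_sub_const:
  fixes g k :: "int poly"
  assumes monic: "lead_coeff g = 1" and deg: "degree g \<ge> 1" and dvd: "[:p:] dvd g * k - [:c:]"
  shows "p dvd c"
proof -
  define k' where "k' = map_poly (\<lambda>z. z mod p) k"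
  have coeff_k': "Polynomial.coeff k' n = Polynomial.coeff k n mod p" for n
    by (simp add: k'_def coeff_map_poly)
  have "[:p:] dvd k - k'"
    by (simp add: const_poly_dvd_iff coeff_k')
  then have "[:p:] dvd (g * k - [:c:]) - g * (k - k')"
    by (rule dvd_diff[OF dvd dvd_mult])
  then have dvd': "[:p:] dvd g * k' - [:c:]"
    by (simp add: algebra_simps)
  show ?thesis
  proof (cases "k' = 0")
    case True
    then show ?thesis using dvd' by simp
  next
    case False
    have "g \<noteq> 0" using monic by auto
    then have deg_gk': "degree (g * k') = degree g + degree k'"
      using False by (rule degree_mult_eq)
    have "degree (g * k') \<noteq> 0" using deg deg_gk' by simp
    then have "Polynomial.coeff (g * k' - [:c:]) (degree (g * k')) = lead_coeff (g * k')"
      by (simp add: coeff_pCons split: nat.split)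
    also have "\<dots> = lead_coeff k'" using monic by (simp add: lead_coeff_mult)
    finally have lead: "Polynomial.coeff (g * k' - [:c:]) (degree (g * k')) = lead_coeff k'" .
    have "p dvd Polynomial.coeff (g * k' - [:c:]) (degree (g * k'))"
      using dvd' const_poly_dvd_iff by blast
    then have "p dvd Polynomial.coeff k (degree k') mod p"
      unfolding lead coeff_k' .
    then have "p dvd Polynomial.coeff k (degree k')"
      by (simp add: dvd_mod_iff)
    then have "lead_coeff k' = 0"
      unfolding coeff_k' by (rule dvd_imp_mod_0)
    then show ?thesis using False by simp
  qed
qed

definition is_int_minpoly :: "'a::comm_ring_1 \<Rightarrow> int poly \<Rightarrow> bool" where
  "is_int_minpoly \<omega> g \<longleftrightarrow>
     lead_coeff g = 1 \<and> ipoly g \<omega> = 0 \<and> (\<forall>q. ipoly q \<omega> = 0 \<longrightarrow> g dvd q)"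

lemma degree_int_minpoly:
  assumes "is_int_minpoly \<omega> g"
  shows "degree g \<ge> 1"
proof (rule ccontr)
  assume "\<not> degree g \<ge> 1"
  then have "degree g = 0" by simp
  then obtain c where "g = [:c:]" by (rule degree_eq_zeroE)
  then have "g = 1" using assms by (simp add: is_int_minpoly_def one_pCons)
  then show False using assms by (simp add: is_int_minpoly_def)
qed

lemma int_minpoly_exists:
  fixes \<omega> :: "'a::{idom, ring_char_0}"
  assumes monic: "lead_coeff q0 = 1" and root: "ipoly q0 \<omega> = 0"
  obtains g where "is_int_minpoly \<omega> g"
proof -
  define P where "P q \<longleftrightarrow> q \<noteq> 0 \<and> ipoly q \<omega> = 0" for q
  have "P q0" using monic root by (auto simp: P_def)
  then obtain g0 where g0: "P g0" and g0_min: "\<And>q. P q \<Longrightarrow> degree g0 \<le> degree q"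
    using ex_has_least_nat[of P q0 degree] by blast
  define g1 where "g1 = primitive_part g0"
  have "g0 \<noteq> 0" using g0 by (simp add: P_def)
  then have g1_nz: "g1 \<noteq> 0" and content_g1: "content g1 = 1" and deg_g1: "degree g1 = degree g0"
    by (simp_all add: g1_def)
  have "ipoly g0 \<omega> = of_int (content g0) * ipoly g1 \<omega>"
    by (metis content_times_primitive_part g1_def map_poly_of_int_smult poly_smult)
  then have g1_root: "ipoly g1 \<omega> = 0" using g0 \<open>g0 \<noteq> 0\<close> by (simp add: P_def)
  have g1_dvd: "g1 dvd q" if q: "ipoly q \<omega> = 0" for q
  proof -
    obtain a s where a: "a \<noteq> 0" and div: "Polynomial.smult a q = g1 * s + pseudo_mod q g1"
      using pseudo_mod(1)[OF g1_nz] by blast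
    have "ipoly (pseudo_mod q g1) \<omega> = 0"
      using arg_cong[OF div, of "\<lambda>r. ipoly r \<omega>"] q g1_root by simp
    then have "pseudo_mod q g1 = 0"
      using pseudo_mod(2)[OF g1_nz, of q] g0_min deg_g1 by (force simp: P_def)
    then have "g1 dvd Polynomial.smult a q" using div by simp
    then have "fract_poly g1 dvd Polynomial.smult (to_fract a) (fract_poly q)"
      by (metis fract_poly_dvd fract_poly_smult)
    then have "fract_poly g1 dvd fract_poly q" using a by (simp add: dvd_smult_iff)
    then show ?thesis using content_g1 by (rule fract_poly_dvdD)
  qed
  obtain h where "q0 = g1 * h" using g1_dvd[OF root] by (elim dvdE)
  then have "lead_coeff g1 * lead_coeff h = 1" using monic by (simp add: lead_coeff_mult)
  then have unit: "lead_coeff g1 * lead_coeff g1 = 1" using zmult_eq_1_iff by auto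
  define g where "g = Polynomial.smult (lead_coeff g1) g1"
  have "is_int_minpoly \<omega> g"
    unfolding is_int_minpoly_def
  proof (intro conjI allI impI)
    show "lead_coeff g = 1" using unit g1_nz by (simp add: g_def)
    show "ipoly g \<omega> = 0" using g1_root by (simp add: g_def)
    fix q assume "ipoly q \<omega> = 0"
    then obtain t where "q = g1 * t" by (elim g1_dvd[THEN dvdE])
    then have "q = g * Polynomial.smult (lead_coeff g1) t" using unit by (simp add: g_def)
    then show "g dvd q" by (rule dvdI)
  qed
  then show ?thesis by (rule that)
qed

text \<open>
  Dedekind's argument: if g(\<omega>^p) \<noteq> 0, the cofactor h of g in X^N - 1 vanishes at \<omega>^p, so
  g divides h(X^p) \<equiv> h^p (mod p); evaluating the derivative of X^N - 1 = g h at \<omega> then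
  shows that N^p lies in p \<int>[X] + g \<int>[X], i.e. p divides N.
\<close>

lemma prime_dvd_if_int_minpoly_cofactor_root:
  fixes \<omega> :: "'a::{idom, ring_char_0}"
  assumes g: "is_int_minpoly \<omega> g" and fact: "g * h = Polynomial.monom 1 N - 1"
    and unity: "\<omega> ^ N = 1" and N: "N > 0" and p: "prime p" and root: "ipoly h (\<omega> ^ p) = 0"
  shows "p dvd N"
proof -
  have g_root: "ipoly g \<omega> = 0" and g_dvd: "\<And>q. ipoly q \<omega> = 0 \<Longrightarrow> g dvd q"
    using g by (auto simp: is_int_minpoly_def)
  obtain s where s: "h ^ p - pcompose h (Polynomial.monom 1 p) = [:int p:] * s"
    using prime_dvd_power_sub_pcompose_monom[OF p, of h] by (elim dvdE)
  have "ipoly (pcompose h (Polynomial.monom 1 p)) \<omega> = 0"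
    using root by (simp add: poly_pcompose poly_monom)
  then have h_pow: "ipoly h \<omega> ^ p = of_nat p * ipoly s \<omega>"
    using arg_cong[OF s, of "\<lambda>r. ipoly r \<omega>"] by simp
  have "ipoly (pderiv (g * h)) \<omega> * \<omega> = of_nat N * \<omega> ^ N"
    unfolding fact using N by (simp add: pderiv_diff pderiv_monom poly_monom power_eq_if)
  then have deriv: "ipoly h \<omega> * ipoly (pderiv g) \<omega> * \<omega> = of_nat N"
    using g_root unity by (simp add: pderiv_mult mult_ac)
  define T where "T = [:int N ^ p:] - [:int p:] * (pderiv g ^ p * Polynomial.monom 1 p * s)"
  have "ipoly T \<omega> = of_nat N ^ p - (ipoly h \<omega> * ipoly (pderiv g) \<omega> * \<omega>) ^ p"
    by (simp add: T_def h_pow poly_monom power_mult_distrib mult_ac)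
  then have "ipoly T \<omega> = 0" using deriv by simp
  then obtain k where k: "T = g * k" by (elim g_dvd[THEN dvdE])
  then have "g * k - [:int N ^ p:] = [:int p:] * - (pderiv g ^ p * Polynomial.monom 1 p * s)"
    using k[symmetric] by (simp add: T_def)
  then have "[:int p:] dvd g * k - [:int N ^ p:]" by (rule dvdI)
  then have "int p dvd int N ^ p"
    using g degree_int_minpoly[OF g] by (intro prime_dvd_const_of_monic_mult_sub_const)
      (auto simp: is_int_minpoly_def)
  then show "p dvd N"
    using p by (metis of_nat_dvd_iff of_nat_power prime_dvd_power)
qed

lemma int_poly_root_power_prime:
  fixes \<omega> :: "'a::{idom, ring_char_0}"
  assumes unity: "\<omega> ^ N = 1" and N: "N > 0" and p: "prime p" "\<not> p dvd N"
    and q: "ipoly q \<omega> = 0"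
  shows "ipoly q (\<omega> ^ p) = 0"
proof -
  define X_N :: "int poly" where "X_N = Polynomial.monom 1 N - 1"
  have X_N_root: "ipoly X_N z = 0" if "z ^ N = 1" for z :: 'a
    using that by (simp add: X_N_def poly_monom)
  have X_N_eq: "X_N = [:-1:] + Polynomial.monom 1 N" by (simp add: X_N_def one_pCons)
  have "lead_coeff X_N = 1"
    unfolding X_N_eq using N by (subst lead_coeff_add_le) (simp_all add: degree_monom_eq)
  then obtain g where g: "is_int_minpoly \<omega> g"
    using int_minpoly_exists X_N_root[OF unity] by blast
  then obtain h where fact: "g * h = X_N"
    using X_N_root[OF unity] by (metis is_int_minpoly_def dvdE)
  have "ipoly g (\<omega> ^ p) = 0"
  proof (rule ccontr)
    assume nz: "ipoly g (\<omega> ^ p) \<noteq> 0"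
    have "(\<omega> ^ p) ^ N = 1" using unity by (rule root_of_unity_power)
    then have "ipoly g (\<omega> ^ p) * ipoly h (\<omega> ^ p) = 0"
      using X_N_root by (simp flip: fact)
    then have "ipoly h (\<omega> ^ p) = 0" using nz by simp
    then have "p dvd N"
      using prime_dvd_if_int_minpoly_cofactor_root[OF g fact[unfolded X_N_def] unity N p(1)] by simp
    then show False using p(2) by simp
  qed
  moreover have "g dvd q" using g q by (simp add: is_int_minpoly_def)
  ultimately show ?thesis by (elim dvdE) simp
qed

lemma int_poly_root_power_coprime:
  fixes \<omega> :: "'a::{idom, ring_char_0}"
  assumes unity: "\<omega> ^ N = 1" and N: "N > 0" and q: "ipoly q \<omega> = 0" and "coprime u N"
  shows "ipoly q (\<omega> ^ u) = 0"
  using \<open>coprime u N\<close>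
proof (induction u rule: prime_divisors_induct)
  case zero
  then have "\<omega> = 1" using unity by simp
  then show ?case using q by simp
next
  case (unit u)
  then show ?case using q by simp
next
  case (factor p u)
  then have "coprime u N" and "\<not> p dvd N"
    using prime_imp_coprime by (auto simp: coprime_commute)
  moreover have "(\<omega> ^ u) ^ N = 1" using unity by (rule root_of_unity_power)
  ultimately have "ipoly q ((\<omega> ^ u) ^ p) = 0"
    using factor.IH by (intro int_poly_root_power_prime[OF _ N factor.hyps]) auto
  then show ?case by (metis power_mult mult.commute)
qed

section \<open>The group, its characters and the Fourier transform\<close>

lemma gsmul_in_grp:
  assumes "\<forall>k<length a. a ! k > 0"
  shows "gsmul a c x \<in> grp a"
  using assms by (auto simp: gsmul_def grp_def)

lemma gsmul_1:
  assumes "x \<in> grp a"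
  shows "gsmul a 1 x = x"
  using assms by (auto simp: gsmul_def grp_def)

lemma gneg_gsmul: "gneg a (gsmul a c x) = gsmul a (- c) x"
  by (rule ext) (simp add: gneg_def gsmul_def mod_minus_eq)

lemma gsum_map_gsmul: "gsum a (map (\<lambda>c. gsmul a c x) cs) = gsmul a (sum_list cs) x"
proof (induction cs)
  case Nil
  show ?case by (rule ext) (simp add: gsum_def gsmul_def gzero_def)
next
  case (Cons c cs)
  then show ?case
    by (auto simp: gsum_def gadd_def gsmul_def mod_add_eq distrib_right)
qed

lemma gsmul_cong:
  assumes dvd: "\<forall>k<length a. a ! k dvd N" and cong: "[c = d] (mod int N)"
  shows "gsmul a c x = gsmul a d x"
proof (rule ext)
  fix k
  show "gsmul a c x k = gsmul a d x k"
  proof (cases "k < length a")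
    case True
    then have "[c = d] (mod int (a ! k))"
      using dvd cong by (metis cong_dvd_modulus of_nat_dvd_iff)
    then have "[c * x k = d * x k] (mod int (a ! k))" by (rule cong_scalar_right)
    then show ?thesis using True by (simp add: gsmul_def cong_def)
  qed (simp add: gsmul_def)
qed

lemma Mhat_map_gsmul:
  "Mhat a f (map (\<lambda>c. gsmul a c x) cs) =
     (\<Prod>c\<leftarrow>cs. fhat a f (gsmul a c x)) * fhat a f (gsmul a (- sum_list cs) x)"
  by (simp add: Mhat_def gsum_map_gsmul gneg_gsmul o_def)

lemma expG_pos_annihilates:
  assumes "\<forall>k<length a. a ! k > 0"
  shows "expG a > 0 \<and> (\<forall>z\<in>grp a. gsmul a (int (expG a)) z = gzero)"
  unfolding expG_def
proof (rule LeastI_ex)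
  have "prod_list a > 0"
    using assms by (metis in_set_conv_nth prod_list_zero_iff bot_nat_0.not_eq_extremum)
  moreover have "gsmul a (int (prod_list a)) z = gzero" for z
  proof (rule ext)
    fix k
    have "k < length a \<Longrightarrow> a ! k dvd prod_list a" by (intro prod_list_dvd) simp
    then show "gsmul a (int (prod_list a)) z k = gzero k"
      by (auto simp: gsmul_def gzero_def)
  qed
  ultimately show "\<exists>n. n > 0 \<and> (\<forall>z\<in>grp a. gsmul a (int n) z = gzero)" by blast
qed

lemma expG_pos:
  assumes "\<forall>k<length a. a ! k > 0"
  shows "expG a > 0"
  using expG_pos_annihilates[OF assms] by blast

lemma nth_dvd_expG:
  assumes apos: "\<forall>k<length a. a ! k > 0" and k: "k < length a"
  shows "a ! k dvd expG a"
proof (cases "a ! k = 1")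
  case False
  define e where "e = (\<lambda>j. if j = k then 1 else 0 :: int)"
  have "e \<in> grp a" using False apos k by (fastforce simp: e_def grp_def)
  then have "gsmul a (int (expG a)) e k = 0"
    using expG_pos_annihilates[OF apos] by (simp add: gzero_def)
  then show ?thesis using k by (simp add: gsmul_def e_def flip: dvd_eq_mod_eq_0)
qed simp

lemma finite_grp: "finite (grp a)"
proof -
  define ext where "ext g k = (if k < length a then g k else 0)" for g :: "nat \<Rightarrow> int" and k
  have "grp a \<subseteq> ext ` (\<Pi>\<^sub>E k\<in>{..<length a}. {0..<int (a ! k)})"
  proof
    fix x assume x: "x \<in> grp a"
    then have "x = ext (restrict x {..<length a})" by (auto simp: ext_def grp_def)
    moreover have "restrict x {..<length a} \<in> (\<Pi>\<^sub>E k\<in>{..<length a}. {0..<int (a ! k)})"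
      using x by (auto simp: grp_def)
    ultimately show "x \<in> ext ` (\<Pi>\<^sub>E k\<in>{..<length a}. {0..<int (a ! k)})" by blast
  qed
  then show ?thesis by (rule finite_subset) (simp add: finite_PiE)
qed

lemma rat_common_denominator:
  fixes r :: "'a \<Rightarrow> rat"
  assumes "finite S"
  obtains D :: int and n :: "'a \<Rightarrow> int"
  where "D > 0" "\<And>y. y \<in> S \<Longrightarrow> of_int D * r y = of_int (n y)"
proof
  define d where "d y = snd (quotient_of (r y))" for y
  define D where "D = (\<Prod>y\<in>S. d y)"
  show "D > 0" by (simp add: D_def d_def quotient_of_denom_pos' prod_pos)
  fix y assume "y \<in> S"
  with assms have D_eq: "D = d y * (D div d y)" unfolding D_def by (simp add: dvd_prodI)
  have r_eq: "r y = of_int (fst (quotient_of (r y))) / of_int (d y)"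
    by (simp add: d_def quotient_of_div)
  have "d y \<noteq> 0" using quotient_of_denom_pos'[of "r y"] by (simp add: d_def)
  then show "of_int D * r y = of_int (fst (quotient_of (r y)) * (D div d y))"
    by (subst D_eq, subst r_eq) simp
qed

definition chi_exponent :: "nat list \<Rightarrow> nat \<Rightarrow> (nat \<Rightarrow> int) \<Rightarrow> (nat \<Rightarrow> int) \<Rightarrow> nat" where
  "chi_exponent a N x y = (\<Sum>k<length a. nat (x k) * nat (y k) * (N div a ! k))"

lemma cnj_chi_eq_power:
  assumes apos: "\<forall>k<length a. a ! k > 0" and dvd: "\<forall>k<length a. a ! k dvd N" and N: "N > 0"
    and x: "x \<in> grp a" and y: "y \<in> grp a"
  shows "cnj (chi a x y) = exp (- 2 * of_real pi * \<i> / of_nat N) ^ chi_exponent a N x y"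
proof -
  have "of_int (x k * y k) / of_nat (a ! k) = real (nat (x k) * nat (y k) * (N div a ! k)) / N"
    if k: "k < length a" for k
    using x y apos dvd k N by (auto simp: grp_def real_of_nat_div field_simps)
  then have "(\<Sum>k<length a. of_int (x k * y k) / of_nat (a ! k)) = real (chi_exponent a N x y) / N"
    by (simp add: chi_exponent_def sum_divide_distrib)
  then have "cnj (chi a x y) = exp (cnj (2 * of_real pi * \<i> * of_real (real (chi_exponent a N x y) / N)))"
    unfolding chi_def by (simp only: exp_cnj)
  also have "cnj (2 * of_real pi * \<i> * of_real (real (chi_exponent a N x y) / N)) =
      of_nat (chi_exponent a N x y) * (- 2 * of_real pi * \<i> / of_nat N)"
    by simp
  also have "exp \<dots> = exp (- 2 * of_real pi * \<i> / of_nat N) ^ chi_exponent a N x y"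
    by (rule exp_of_nat_mult)
  finally show ?thesis .
qed

lemma chi_exponent_gsmul:
  assumes apos: "\<forall>k<length a. a ! k > 0" and dvd: "\<forall>k<length a. a ! k dvd N"
    and x: "x \<in> grp a" and y: "y \<in> grp a"
  shows "[chi_exponent a N (gsmul a (int c) x) y = c * chi_exponent a N x y] (mod N)"
proof -
  have int_exponent: "int (chi_exponent a N z y) = (\<Sum>k<length a. z k * y k * int (N div a ! k))"
    if "z \<in> grp a" for z
    using that y unfolding chi_exponent_def by (auto simp: grp_def intro!: sum.cong)
  have "[(\<Sum>k<length a. gsmul a (int c) x k * y k * int (N div a ! k)) =
      (\<Sum>k<length a. int c * (x k * y k * int (N div a ! k)))] (mod int N)"
  proof (rule cong_sum)
    fix k assume "k \<in> {..<length a}"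
    then have k: "k < length a" by simp
    have "int (a ! k) dvd (int c * x k) mod int (a ! k) - int c * x k"
      using mod_eq_dvd_iff[of "(int c * x k) mod int (a ! k)" "int (a ! k)" "int c * x k"] by simp
    then have "int (a ! k) dvd gsmul a (int c) x k - int c * x k"
      using k by (simp add: gsmul_def)
    then have "int (a ! k) * int (N div a ! k) dvd
        (gsmul a (int c) x k - int c * x k) * (y k * int (N div a ! k))"
      by (rule mult_dvd_mono) (rule dvd_triv_right)
    moreover have "int (a ! k) * int (N div a ! k) = int N"
      using dvd k by (simp flip: of_nat_mult)
    moreover have "gsmul a (int c) x k * y k * int (N div a ! k) - int c * (x k * y k * int (N div a ! k)) =
        (gsmul a (int c) x k - int c * x k) * (y k * int (N div a ! k))"
      by (simp add: algebra_simps)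
    ultimately show "[gsmul a (int c) x k * y k * int (N div a ! k) =
        int c * (x k * y k * int (N div a ! k))] (mod int N)"
      by (simp only: cong_iff_dvd_diff)
  qed
  moreover have "int (chi_exponent a N (gsmul a (int c) x) y) =
      (\<Sum>k<length a. gsmul a (int c) x k * y k * int (N div a ! k))"
    by (rule int_exponent[OF gsmul_in_grp[OF apos]])
  moreover have "int (c * chi_exponent a N x y) =
      (\<Sum>k<length a. int c * (x k * y k * int (N div a ! k)))"
    by (simp only: of_nat_mult int_exponent[OF x] sum_distrib_left)
  ultimately show ?thesis by (simp only: flip: cong_int_iff)
qed

lemma power_cong_of_power_eq_1:
  fixes w :: "'a::monoid_mult"
  assumes "w ^ N = 1" and "[m = n] (mod N)"
  shows "w ^ m = w ^ n"
proof -
  have "w ^ k = w ^ (k mod N)" for k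
  proof -
    have "w ^ k = w ^ (N * (k div N) + k mod N)" by simp
    also have "\<dots> = (w ^ N) ^ (k div N) * w ^ (k mod N)" by (simp only: power_add power_mult)
    finally show ?thesis using assms(1) by simp
  qed
  then show ?thesis using assms(2) unfolding cong_def by metis
qed

text \<open>This is the only place where f being rational-valued is used.\<close>

lemma fhat_gsmul_eq_ipoly:
  assumes apos: "\<forall>k<length a. a ! k > 0" and x: "x \<in> grp a"
  obtains D :: int and Q :: "int poly" and \<omega> :: complex
  where "D > 0" "\<omega> ^ expG a = 1"
    "\<And>c. of_int D * fhat a f (gsmul a (int c) x) = ipoly Q (\<omega> ^ c)"
proof -
  define N where "N = expG a"
  have N: "N > 0" using expG_pos[OF apos] by (simp add: N_def)
  have dvd: "\<forall>k<length a. a ! k dvd N" using nth_dvd_expG[OF apos] by (simp add: N_def)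
  define \<omega> :: complex where "\<omega> = exp (- 2 * of_real pi * \<i> / of_nat N)"
  have "\<omega> ^ N = exp (of_nat N * (- 2 * of_real pi * \<i> / of_nat N))"
    unfolding \<omega>_def by (rule exp_of_nat_mult[symmetric])
  also have "\<dots> = 1" using N by (simp add: exp_minus)
  finally have unity: "\<omega> ^ N = 1" .
  obtain D n where D: "D > 0" and n: "\<And>y. y \<in> grp a \<Longrightarrow> of_int D * f y = of_int (n y)"
    using rat_common_denominator[OF finite_grp] by blast
  define Q where "Q = (\<Sum>y\<in>grp a. Polynomial.monom (n y) (chi_exponent a N x y))"
  have "of_int D * fhat a f (gsmul a (int c) x) = ipoly Q (\<omega> ^ c)" for c
  proof -
    have "of_int D * fhat a f (gsmul a (int c) x) =
        (\<Sum>y\<in>grp a. of_real (of_rat (of_int D * f y)) * cnj (chi a (gsmul a (int c) x) y))"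
      by (simp add: fhat_def sum_distrib_left of_rat_mult mult.assoc)
    also have "\<dots> = (\<Sum>y\<in>grp a. of_int (n y) * (\<omega> ^ c) ^ chi_exponent a N x y)"
    proof (rule sum.cong[OF refl])
      fix y assume y: "y \<in> grp a"
      have "cnj (chi a (gsmul a (int c) x) y) = \<omega> ^ chi_exponent a N (gsmul a (int c) x) y"
        unfolding \<omega>_def using apos dvd N gsmul_in_grp[OF apos] y by (rule cnj_chi_eq_power)
      also have "\<dots> = \<omega> ^ (c * chi_exponent a N x y)"
        using unity chi_exponent_gsmul[OF apos dvd x y] by (rule power_cong_of_power_eq_1)
      finally show "of_real (of_rat (of_int D * f y)) * cnj (chi a (gsmul a (int c) x) y) =
          of_int (n y) * (\<omega> ^ c) ^ chi_exponent a N x y"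
        by (simp add: n[OF y] power_mult)
    qed
    also have "\<dots> = ipoly Q (\<omega> ^ c)"
      by (simp add: Q_def map_poly_of_int_sum poly_sum poly_monom)
    finally show ?thesis .
  qed
  with D unity show ?thesis by (intro that) (simp_all add: N_def)
qed

lemma fhat_gsmul_nonzero:
  assumes apos: "\<forall>k<length a. a ! k > 0" and x: "x \<in> grp a" and fx: "fhat a f x \<noteq> 0"
    and coprime: "coprime c (int (expG a))"
  shows "fhat a f (gsmul a c x) \<noteq> 0"
proof
  assume fcx: "fhat a f (gsmul a c x) = 0"
  define N where "N = expG a"
  have N: "N > 0" using expG_pos[OF apos] by (simp add: N_def)
  have dvd: "\<forall>k<length a. a ! k dvd N" using nth_dvd_expG[OF apos] by (simp add: N_def)
  obtain D Q \<omega> where D: "D > 0" and unity: "\<omega> ^ N = 1"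
    and Q: "\<And>c. of_int D * fhat a f (gsmul a (int c) x) = ipoly Q (\<omega> ^ c)"
    using fhat_gsmul_eq_ipoly[OF apos x] unfolding N_def by blast
  define c' where "c' = nat (c mod int N)"
  have c': "int c' = c mod int N" using N by (simp add: c'_def)
  then have "[c = int c'] (mod int N)" by (simp add: cong_def)
  then have "gsmul a c x = gsmul a (int c') x" by (rule gsmul_cong[OF dvd])
  then have "of_int D * fhat a f (gsmul a (int c') x) = 0" using fcx by simp
  then have root: "ipoly Q (\<omega> ^ c') = 0" by (simp only: Q)
  have "coprime (int c') (int N)" using coprime N by (simp add: c' N_def)
  then obtain v where v: "[c' * v = 1] (mod N)"
    using cong_solve_coprime_nat[of c' N] by auto
  have "coprime (c' * v) N" using cong_imp_coprime[OF cong_sym[OF v]] by simp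
  then have "coprime v N" by simp
  with root_of_unity_power[OF unity] N root have "ipoly Q ((\<omega> ^ c') ^ v) = 0"
    by (rule int_poly_root_power_coprime)
  moreover have "(\<omega> ^ c') ^ v = \<omega> ^ 1"
    unfolding power_mult[symmetric] using unity v by (rule power_cong_of_power_eq_1)
  ultimately have "of_int D * fhat a f (gsmul a (int 1) x) = 0" by (simp only: Q)
  then show False using D fx gsmul_1[OF x] by simp
qed

section \<open>Autocorrelations and telescoping\<close>

lemma Mhat_gsmul_4:
  "Mhat a f [gsmul a c x, gsmul a d x, gneg a (gsmul a c x)] =
     (fhat a f (gsmul a c x) * fhat a f (gsmul a d x)) *
     (fhat a f (gsmul a (- c) x) * fhat a f (gsmul a (- d) x))"
  using Mhat_map_gsmul[of a f x "[c, d, - c]"] by (simp add: gneg_gsmul mult_ac)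

lemma Mhat_gsmul_6:
  assumes dvd: "\<forall>k<length a. a ! k dvd N" and cong: "[2 * (c + d) = c' + d'] (mod int N)"
  shows "Mhat a f [gsmul a c x, gsmul a d x, gsmul a c x, gsmul a d x, gneg a (gsmul a c' x)] =
     (fhat a f (gsmul a c x) * fhat a f (gsmul a d x)) ^ 2 *
     (fhat a f (gsmul a (- c') x) * fhat a f (gsmul a (- d') x))"
proof -
  have "- sum_list [c, d, c, d, - c'] - - d' = - (2 * (c + d) - (c' + d'))"
    by (simp add: algebra_simps)
  then have "[- sum_list [c, d, c, d, - c'] = - d'] (mod int N)"
    using cong by (simp only: cong_iff_dvd_diff dvd_minus_iff)
  then have "gsmul a (- sum_list [c, d, c, d, - c']) x = gsmul a (- d') x"
    by (rule gsmul_cong[OF dvd])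
  then show ?thesis
    using Mhat_map_gsmul[of a f x "[c, d, c, d, - c']"]
    by (simp add: gneg_gsmul power2_eq_square mult_ac)
qed

lemma double_sum_cong_of_pow2:
  assumes "[2 ^ k = u + v] (mod N)" and "[2 ^ (k + 1) = u' + v'] (mod N)"
  shows "[2 * (int u + int v) = int u' + int v'] (mod int N)"
proof -
  have "[2 ^ (k + 1) = 2 * (u + v)] (mod N)"
    using cong_scalar_left[OF assms(1), of 2] by simp
  then have "[2 * (u + v) = u' + v'] (mod N)"
    using assms(2) by (meson cong_sym cong_trans)
  then show ?thesis by (simp flip: cong_int_iff)
qed

lemma prod_telescoping_squares:
  fixes P :: "nat \<Rightarrow> 'a::field"
  assumes "\<And>k. 1 \<le> k \<Longrightarrow> P k \<noteq> 0"
  shows "(\<Prod>k = 1..n. (P k ^ 2 / P (k + 1)) ^ 2 ^ (n - k)) = P 1 ^ 2 ^ n / P (n + 1)"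
proof (induction n)
  case 0
  show ?case using assms by simp
next
  case (Suc n)
  have "(\<Prod>k = 1..Suc n. (P k ^ 2 / P (k + 1)) ^ 2 ^ (Suc n - k)) =
      (\<Prod>k = 1..n. ((P k ^ 2 / P (k + 1)) ^ 2 ^ (n - k)) ^ 2) * (P (n + 1) ^ 2 / P (n + 2))"
    by (simp add: prod.cl_ivl_Suc Suc_diff_le power_mult[symmetric] mult.commute)
  also have "\<dots> = (P 1 ^ 2 ^ n / P (n + 1)) ^ 2 * (P (n + 1) ^ 2 / P (n + 2))"
    by (simp only: prod_power_distrib[symmetric] Suc.IH)
  also have "\<dots> = P 1 ^ 2 ^ Suc n / P (Suc n + 1)"
    using assms[of "n + 1"] by (simp add: power_divide power_mult[symmetric] mult.commute)
  finally show ?case .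
qed

lemma telescoping_ratio_identity:
  fixes A B P P' :: "nat \<Rightarrow> 'a::field"
  assumes nz: "\<And>k. 1 \<le> k \<Longrightarrow> P k \<noteq> 0 \<and> P' k \<noteq> 0"
    and A: "\<And>k. A k = P k * P' k" and B: "\<And>k. 1 \<le> k \<Longrightarrow> B k = P k ^ 2 * P' (k + 1)"
    and P1: "P 1 = z ^ 2" and period: "P (l + m) = P m" and m: "1 \<le> m"
  shows "(\<forall>k\<in>{1..l + m - 1}. A (k + 1) \<noteq> 0) \<and>
    z ^ (2 ^ m * (2 ^ l - 1)) =
      (\<Prod>k = 1..l + m - 1. (B k / A (k + 1)) ^ 2 ^ (l + m - 1 - k)) /
      (\<Prod>k = 1..m - 1. (B k / A (k + 1)) ^ 2 ^ (m - 1 - k))"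
proof
  show "\<forall>k\<in>{1..l + m - 1}. A (k + 1) \<noteq> 0" using nz by (simp add: A)
  have ratio: "B k / A (k + 1) = P k ^ 2 / P (k + 1)" if "1 \<le> k" for k
    using nz[of "k + 1"] by (simp add: A B[OF that])
  have telescope: "(\<Prod>k = 1..n. (B k / A (k + 1)) ^ 2 ^ (n - k)) = z ^ 2 ^ Suc n / P (n + 1)" for n
  proof -
    have "(\<Prod>k = 1..n. (B k / A (k + 1)) ^ 2 ^ (n - k)) = (\<Prod>k = 1..n. (P k ^ 2 / P (k + 1)) ^ 2 ^ (n - k))"
      by (rule prod.cong[OF refl]) (subst ratio, auto)
    also have "\<dots> = P 1 ^ 2 ^ n / P (n + 1)"
      using nz by (intro prod_telescoping_squares) blast
    also have "P 1 ^ 2 ^ n = z ^ 2 ^ Suc n" unfolding P1 by (simp flip: power_mult)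
    finally show ?thesis .
  qed
  have "z \<noteq> 0" using nz[of 1] P1 by auto
  then have "z ^ (2 ^ m * (2 ^ l - 1)) = z ^ 2 ^ (l + m) / z ^ 2 ^ m"
    by (simp add: power_diff power_add diff_mult_distrib2 mult.commute)
  also have "\<dots> = (z ^ 2 ^ Suc (l + m - 1) / P (l + m - 1 + 1)) / (z ^ 2 ^ Suc (m - 1) / P (m - 1 + 1))"
    using m nz[of m] by (simp add: period)
  finally show "z ^ (2 ^ m * (2 ^ l - 1)) =
      (\<Prod>k = 1..l + m - 1. (B k / A (k + 1)) ^ 2 ^ (l + m - 1 - k)) /
      (\<Prod>k = 1..m - 1. (B k / A (k + 1)) ^ 2 ^ (m - 1 - k))"
    by (simp only: telescope)
qed

theorem theorem5:
  fixes a :: "nat list" and f :: "(nat \<Rightarrow> int) \<Rightarrow> rat"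
    and u v :: "nat \<Rightarrow> nat" and x :: "nat \<Rightarrow> int"
  assumes apos: "\<forall>k<length a. a ! k > 0"
    and Neven: "even (expG a)"
    and uv_unit: "\<forall>k\<ge>1. u k < expG a \<and> v k < expG a \<and>
                     coprime (u k) (expG a) \<and> coprime (v k) (expG a)"
    and uv_sum: "\<forall>k\<ge>1. [2 ^ k = u k + v k] (mod expG a)"
    and uv1: "u 1 = 1" "v 1 = 1"
    and uv_per: "\<forall>k\<ge>multiplicity 2 (expG a).
        u (k + totient (expG a div 2 ^ multiplicity 2 (expG a))) = u k \<and>
        v (k + totient (expG a div 2 ^ multiplicity 2 (expG a))) = v k"
    and xG: "x \<in> grp a"
    and xsupp: "fhat a f x \<noteq> 0"
  shows "let N = expG a; m = multiplicity 2 N; l = totient (N div 2 ^ m);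
             ux = (\<lambda>k. gsmul a (int (u k)) x); vx = (\<lambda>k. gsmul a (int (v k)) x);
             A = (\<lambda>k. Mhat a f [ux k, vx k, gneg a (ux k)]);
             B = (\<lambda>k. Mhat a f [ux k, vx k, ux k, vx k, gneg a (ux (k + 1))])
         in (\<forall>k\<in>{1..l + m - 1}. A (k + 1) \<noteq> 0) \<and>
            fhat a f x ^ (2 ^ m * (2 ^ l - 1)) =
              (\<Prod>k = 1..l + m - 1. (B k / A (k + 1)) ^ (2 ^ (l + m - 1 - k))) /
              (\<Prod>k = 1..m - 1. (B k / A (k + 1)) ^ (2 ^ (m - 1 - k)))"
proof -
  define N where "N = expG a"
  define m where "m = multiplicity 2 N"
  define l where "l = totient (N div 2 ^ m)"
  define P where "P k = fhat a f (gsmul a (int (u k)) x) * fhat a f (gsmul a (int (v k)) x)" for k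
  define P' where "P' k = fhat a f (gsmul a (- int (u k)) x) * fhat a f (gsmul a (- int (v k)) x)" for k
  define A where "A k = Mhat a f [gsmul a (int (u k)) x, gsmul a (int (v k)) x,
    gneg a (gsmul a (int (u k)) x)]" for k
  define B where "B k = Mhat a f [gsmul a (int (u k)) x, gsmul a (int (v k)) x,
    gsmul a (int (u k)) x, gsmul a (int (v k)) x, gneg a (gsmul a (int (u (k + 1))) x)]" for k
  have N: "N > 0" using expG_pos[OF apos] by (simp add: N_def)
  have dvd: "\<forall>k<length a. a ! k dvd N" using nth_dvd_expG[OF apos] by (simp add: N_def)
  have m: "1 \<le> m" using Neven N by (simp add: m_def N_def multiplicity_gt_zero_iff Suc_le_eq)
  have nz: "P k \<noteq> 0 \<and> P' k \<noteq> 0" if "1 \<le> k" for k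
    using uv_unit that fhat_gsmul_nonzero[OF apos xG xsupp] by (simp add: P_def P'_def)
  have A: "A k = P k * P' k" for k
    by (simp add: A_def P_def P'_def Mhat_gsmul_4)
  have B: "B k = P k ^ 2 * P' (k + 1)" if "1 \<le> k" for k
  proof -
    have "[2 ^ k = u k + v k] (mod N)" using uv_sum that by (simp add: N_def)
    moreover have "[2 ^ (k + 1) = u (k + 1) + v (k + 1)] (mod N)"
      using uv_sum[rule_format, of "k + 1"] by (simp add: N_def)
    ultimately have "[2 * (int (u k) + int (v k)) = int (u (k + 1)) + int (v (k + 1))] (mod int N)"
      by (rule double_sum_cong_of_pow2)
    then show ?thesis by (simp add: B_def P_def P'_def Mhat_gsmul_6[OF dvd])
  qed
  have P1: "P 1 = fhat a f x ^ 2"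
    unfolding P_def uv1 by (simp add: gsmul_1[OF xG] power2_eq_square)
  have period: "P (l + m) = P m"
    using uv_per by (simp add: P_def l_def m_def N_def add.commute)
  show ?thesis
    unfolding Let_def N_def[symmetric] m_def[symmetric] l_def[symmetric]
      A_def[symmetric] B_def[symmetric]
    using telescoping_ratio_identity[OF nz A B P1 period m] .
qed

end
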